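(* Let $a>0$ and $0\le r_0<a$, and consider, in polar coordinates $(r,\theta)$ about a pole $O$, the circle of radius $a$ whose centre $C$ has polar coordinates $(r_0,\theta_0)$, so that the ray from $O$ in direction $\theta$ meets the circle at distance $$r(\theta)=r_0\cos(\theta-\theta_0)+\sqrt{a^2-r_0^2\sin^2(\theta-\theta_0)} .$$ Let $\theta_1<\theta_2<\theta_3<\theta_4<\theta_1+\pi$, set $\theta_{i+4}=\theta_i+\pi$ for $i=1,2,3,4$ and $\theta_9=\theta_1+2\pi$, and for $1\le i\le 8$ let $S_i=\frac12\int_{\theta_i}^{\theta_{i+1}} r(\theta)^2\,d\theta$ (the area of the $i$-th of the eight sectors cut from the disc by the four lines through $O$ in directions $\theta_1,\dots,\theta_4$). Suppose that $$(\theta_2-\theta_1)+(\theta_4-\theta_3)=\frac{\pi}{2}$$ and $$\sin 2(\theta_4-\theta_0)+\sin 2(\theta_2-\theta_0)=\sin 2(\theta_3-\theta_0)+\sin 2(\theta_1-\theta_0).$$ Then $$S_1+S_3+S_5+S_7=\frac{\pi}{2}a^2=S_2+S_4+S_6+S_8 .$$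
   Context: Polar coordinates are taken about the pole $O$; the point with polar coordinates $(r,\theta)$ is $O+r(\cos\theta,\sin\theta)$. The sector $S_i$ is the region $\{O+\rho(\cos\theta,\sin\theta):\ \theta_i\le\theta\le\theta_{i+1},\ 0\le\rho\le r(\theta)\}$. *)

theory Defs
  imports "HOL-Analysis.Analysis"
begin

definition ray_radius :: "real \<Rightarrow> real \<Rightarrow> real \<Rightarrow> real \<Rightarrow> real" where
  "ray_radius a r0 th0 th = r0 * cos (th - th0) + sqrt (a^2 - r0^2 * (sin (th - th0))^2)"

definition ext_angle :: "(nat \<Rightarrow> real) \<Rightarrow> nat \<Rightarrow> real" where
  "ext_angle th i = (if i \<le> 4 then th i else if i \<le> 8 then th (i - 4) + pi else th 1 + 2 * pi)"

definition sector_area :: "real \<Rightarrow> real \<Rightarrow> real \<Rightarrow> (nat \<Rightarrow> real) \<Rightarrow> nat \<Rightarrow> real" where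
  "sector_area a r0 th0 th i =
     (1/2) * integral {ext_angle th i .. ext_angle th (Suc i)} (\<lambda>t. (ray_radius a r0 th0 t)^2)"

end

theory Submission
  imports Defs
begin

text \<open>Opposite rays meet the circle at the two roots \<open>r0 cos \<phi> \<plusminus> sqrt (a^2 - r0^2 sin^2 \<phi>)\<close>
  of the same quadratic, so \<open>r(\<theta>)^2 + r(\<theta> + \<pi>)^2 = 2a^2 + 2 r0^2 cos 2(\<theta> - \<theta>0)\<close>.
  Hence a sector together with its opposite sector has area \<open>F(\<theta>') - F(\<theta>)\<close> with
  \<open>F(t) = a^2 t + r0^2/2 sin 2(t - \<theta>0)\<close> (\<open>antipodal_sector_primitive\<close>). Summing over the odd sectors, the linear part of \<open>F\<close>
  gives \<open>a^2 \<pi>/2\<close> by the first hypothesis, and the oscillating part cancels by the second.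
  Since \<open>F(t + \<pi>) = F(t) + \<pi> a^2\<close>, the even sectors make up the other half of the disc.\<close>

lemma ray_radius_sq_add_antipodal:
  assumes "r0^2 \<le> a^2"
  shows "(ray_radius a r0 th0 t)^2 + (ray_radius a r0 th0 (t + pi))^2
           = 2 * a^2 + 2 * r0^2 * cos (2 * (t - th0))"
proof -
  define c s where "c = cos (t - th0)" and "s = sin (t - th0)"
  have opposite: "cos (t + pi - th0) = - c" "sin (t + pi - th0) = - s"
    by (simp_all add: c_def s_def algebra_simps cos_add sin_add cos_diff sin_diff)
  have "s^2 \<le> 1"
    by (simp add: s_def abs_square_le_1 abs_sin_le_one)
  then have "r0^2 * s^2 \<le> a^2"
    using assms mult_left_le[of "s^2" "r0^2"] by simp
  then have root_sq: "(sqrt (a^2 - r0^2 * s^2))^2 = a^2 - r0^2 * s^2"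
    by simp
  have "(ray_radius a r0 th0 t)^2 + (ray_radius a r0 th0 (t + pi))^2
      = (r0 * c + sqrt (a^2 - r0^2 * s^2))^2 + (- (r0 * c) + sqrt (a^2 - r0^2 * s^2))^2"
    unfolding ray_radius_def opposite by (simp add: c_def s_def)
  also have "\<dots> = 2 * r0^2 * (c^2 - s^2) + 2 * a^2"
    unfolding power2_sum power2_diff root_sq by (simp add: algebra_simps power_mult_distrib)
  also have "c^2 - s^2 = cos (2 * (t - th0))"
    unfolding c_def s_def by (rule cos_double[symmetric])
  finally show ?thesis by simp
qed

definition antipodal_sector_primitive :: "real \<Rightarrow> real \<Rightarrow> real \<Rightarrow> real \<Rightarrow> real" where
  "antipodal_sector_primitive a r0 th0 t = a^2 * t + r0^2 / 2 * sin (2 * (t - th0))"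

lemma antipodal_sector_primitive_add_pi:
  "antipodal_sector_primitive a r0 th0 (t + pi) = antipodal_sector_primitive a r0 th0 t + pi * a^2"
  using sin_periodic[of "2 * (t - th0)"]
  by (simp add: antipodal_sector_primitive_def algebra_simps)

lemma integral_ray_radius_sq_antipodal:
  assumes "r0^2 \<le> a^2" and "c \<le> d"
  shows "integral {c..d} (\<lambda>t. (ray_radius a r0 th0 t)^2)
           + integral {c + pi..d + pi} (\<lambda>t. (ray_radius a r0 th0 t)^2)
         = 2 * (antipodal_sector_primitive a r0 th0 d - antipodal_sector_primitive a r0 th0 c)"
proof -
  let ?R = "\<lambda>t. (ray_radius a r0 th0 t)^2"
  let ?F = "\<lambda>t. 2 * antipodal_sector_primitive a r0 th0 t"
  have cont: "continuous_on {c..d} ?R" "continuous_on {c..d} (\<lambda>t. ?R (t + pi))"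
    unfolding ray_radius_def by (intro continuous_intros)+
  have shift: "integral {c + pi..d + pi} ?R = integral {c..d} (\<lambda>t. ?R (t + pi))"
    using integral_shift_Icc_real[of c d ?R pi] by (simp add: o_def add.commute)
  have "((\<lambda>t. 2 * a^2 + 2 * r0^2 * cos (2 * (t - th0))) has_integral ?F d - ?F c) {c..d}"
    unfolding antipodal_sector_primitive_def
    by (intro fundamental_theorem_of_calculus[OF assms(2)])
       (auto simp flip: has_real_derivative_iff_has_vector_derivative intro!: derivative_eq_intros)
  then have "((\<lambda>t. ?R t + ?R (t + pi)) has_integral ?F d - ?F c) {c..d}"
    using ray_radius_sq_add_antipodal[OF assms(1)] by simp
  then show ?thesis
    unfolding shift using integral_add[OF cont[THEN integrable_continuous_interval]]
    by (simp add: integral_unique)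
qed

lemma ext_angle_add_4:
  assumes "1 \<le> i" and "i \<le> 5"
  shows "ext_angle th (i + 4) = ext_angle th i + pi"
  using assms by (cases "i = 5") (auto simp: ext_angle_def)

lemma sector_area_add_antipodal:
  assumes "r0^2 \<le> a^2" and "1 \<le> i" and "i \<le> 4"
    and "ext_angle th i \<le> ext_angle th (i + 1)"
  shows "sector_area a r0 th0 th i + sector_area a r0 th0 th (i + 4)
           = antipodal_sector_primitive a r0 th0 (ext_angle th (i + 1))
             - antipodal_sector_primitive a r0 th0 (ext_angle th i)"
proof -
  have "ext_angle th (i + 4) = ext_angle th i + pi"
       "ext_angle th (i + 1 + 4) = ext_angle th (i + 1) + pi"
    using assms(2,3) ext_angle_add_4[of i th] ext_angle_add_4[of "i + 1" th] by simp_all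
  then show ?thesis
    using integral_ray_radius_sq_antipodal[OF assms(1,4), of th0]
    by (simp add: sector_area_def algebra_simps)
qed

theorem mainTheorem2:
  fixes a r0 th0 :: real and th :: "nat \<Rightarrow> real"
  assumes "a > 0" and "0 \<le> r0" and "r0 < a"
    and "th 1 < th 2" and "th 2 < th 3" and "th 3 < th 4" and "th 4 < th 1 + pi"
    and "(th 2 - th 1) + (th 4 - th 3) = pi / 2"
    and "sin (2 * (th 4 - th0)) + sin (2 * (th 2 - th0))
           = sin (2 * (th 3 - th0)) + sin (2 * (th 1 - th0))"
  shows "sector_area a r0 th0 th 1 + sector_area a r0 th0 th 3
           + sector_area a r0 th0 th 5 + sector_area a r0 th0 th 7 = pi / 2 * a^2
       \<and> sector_area a r0 th0 th 2 + sector_area a r0 th0 th 4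
           + sector_area a r0 th0 th 6 + sector_area a r0 th0 th 8 = pi / 2 * a^2"
proof -
  let ?S = "sector_area a r0 th0 th" and ?F = "antipodal_sector_primitive a r0 th0"
  have "r0^2 \<le> a^2"
    using assms(2,3) by (simp add: power_mono)
  then have pairs: "?S i + ?S (i + 4) = ?F (ext_angle th (i + 1)) - ?F (ext_angle th i)"
    if "i \<in> {1, 2, 3, 4}" for i
    using that assms(4-7)
    by (intro sector_area_add_antipodal) (auto simp: ext_angle_def eval_nat_numeral)
  have angles: "ext_angle th 1 = th 1" "ext_angle th 2 = th 2" "ext_angle th 3 = th 3"
    "ext_angle th 4 = th 4" "ext_angle th 5 = th 1 + pi"
    by (simp_all add: ext_angle_def)
  have odd: "?S 1 + ?S 5 + (?S 3 + ?S 7) = (?F (th 2) - ?F (th 1)) + (?F (th 4) - ?F (th 3))"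
   and even: "?S 2 + ?S 6 + (?S 4 + ?S 8) = (?F (th 3) - ?F (th 2)) + (?F (th 1 + pi) - ?F (th 4))"
    using pairs[of 1] pairs[of 2] pairs[of 3] pairs[of 4] by (simp_all add: angles del: One_nat_def)
  have "(?F (th 2) - ?F (th 1)) + (?F (th 4) - ?F (th 3))
        = a^2 * ((th 2 - th 1) + (th 4 - th 3))
          + r0^2 / 2 * ((sin (2 * (th 4 - th0)) + sin (2 * (th 2 - th0)))
                        - (sin (2 * (th 3 - th0)) + sin (2 * (th 1 - th0))))"
    by (simp add: antipodal_sector_primitive_def algebra_simps)
  also have "\<dots> = pi / 2 * a^2"
    unfolding assms(8,9) by simp
  finally show ?thesis
    using odd even antipodal_sector_primitive_add_pi[of a r0 th0 "th 1"] by linarith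
qed

end
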